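(* Let $\mathbb{Z}/2\mathbb{Z}$ act on $\mathbb{R}^2$ by $0\cdot(u,v)^T=(u,v)^T$ and $1\cdot(u,v)^T=(v,u)^T$. Let $L=\{(u,u)^T:u\in\mathbb{R}\}$, $HP_A=\{(u,v)^T: v>u\}$, $HP_B=\{(u,v)^T:v<u\}$. Let $X$ be a random variable in $\mathbb{R}^2$ with $\mathbb{E}(\|X\|^2)<+\infty$ and $t_0=\mathbb{E}(X)$. (1) If $t_0\in L$, then $[t_0]$ is a Fréchet mean of $[X]$ if and only if $\mathbb{P}(X\in L)=1$. If $t_0\in HP_A$ (resp. $HP_B$), then $[t_0]$ is a Fréchet mean of $[X]$ if and only if $\mathbb{P}(X\in HP_A\cup L)=1$ (resp. $\mathbb{P}(X\in HP_B\cup L)=1$). (2) If $X\sim\mathcal{N}(t_0,s^2\mathrm{Id}_2)$ with $s>0$, then the Fréchet mean of $[X]$ exists and is unique; it has a representative $m_\star$ lying on the line through $t_0$ perpendicular to $L$, and with $d=\mathrm{dist}(t_0,L)$ the consistency bias $\tilde\rho(d,s)=d_Q([t_0],[m_\star])$ equals $$\tilde\rho(d,s)=s\,\frac{2}{\pi}\int_{d/s}^{+\infty} r^2\exp\Big(-\frac{r^2}{2}\Big)\,g\Big(\frac{d}{rs}\Big)\,dr,$$ where $g(x)=\sin(\arccos x)-x\arccos x$ for $x\in[0,1]$ (a nonnegative function). Moreover: (a) if $d>0$, then $\tilde\rho(d,s)\sim s\,\frac{2}{\pi}\int_0^{+\infty}r^2\exp(-r^2/2)\,dr$ as $s\to+\infty$;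 (b) if $d>0$, then $\tilde\rho(d,s)=o(s^k)$ as $s\to0$ for every $k\in\mathbb{N}$; (c) $s\mapsto\tilde\rho(0,s)$ is linear in $s$.
   Context: $\mathbb{R}^2$ carries the Euclidean norm. $[m]$ denotes the orbit of $m$, $d_Q([a],[b])=\min_{\tau\in\mathbb{Z}/2\mathbb{Z}}\|\tau\cdot a-b\|$, $F(m)=\mathbb{E}\big(\min_{\tau}\|\tau\cdot X-m\|^2\big)$, and $[m_\star]$ is a Fréchet mean of $[X]$ if $m_\star$ is a global minimiser of $F$. *)

theory Defs
  imports "HOL-Probability.Probability" "HOL-Library.Landau_Symbols"
begin

text \<open>Action of Z/2Z (represented by bool: False = 0, True = 1) on R^2 = real \<times> real.\<close>
fun z2act :: "bool \<Rightarrow> real \<times> real \<Rightarrow> real \<times> real" where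
  "z2act False p = p"
| "z2act True p = (snd p, fst p)"

definition orbit :: "real \<times> real \<Rightarrow> (real \<times> real) set" where
  "orbit m = range (\<lambda>\<tau>. z2act \<tau> m)"

definition dQ :: "real \<times> real \<Rightarrow> real \<times> real \<Rightarrow> real" where
  "dQ a b = Min (range (\<lambda>\<tau>. norm (z2act \<tau> a - b)))"

definition Lline :: "(real \<times> real) set" where
  "Lline = {(u, u) | u. True}"

definition HPA :: "(real \<times> real) set" where
  "HPA = {(u, v). v > u}"

definition HPB :: "(real \<times> real) set" where
  "HPB = {(u, v). v < u}"

definition frechetF :: "'w measure \<Rightarrow> ('w \<Rightarrow> real \<times> real) \<Rightarrow> real \<times> real \<Rightarrow> real" where
  "frechetF M X m = (LINT \<omega>|M. Min (range (\<lambda>\<tau>. (norm (z2act \<tau> (X \<omega>) - m))\<^sup>2)))"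

definition frechet_mean :: "'w measure \<Rightarrow> ('w \<Rightarrow> real \<times> real) \<Rightarrow> real \<times> real \<Rightarrow> bool" where
  "frechet_mean M X m \<longleftrightarrow> (\<forall>m'. frechetF M X m \<le> frechetF M X m')"

definition gauss2 :: "real \<times> real \<Rightarrow> real \<Rightarrow> real \<times> real \<Rightarrow> ennreal" where
  "gauss2 t0 s p = ennreal (normal_density (fst t0) s (fst p) * normal_density (snd t0) s (snd p))"

definition gfun :: "real \<Rightarrow> real" where
  "gfun x = sin (arccos x) - x * arccos x"

definition rho_tilde :: "real \<Rightarrow> real \<Rightarrow> real" where
  "rho_tilde d s = s * (2 / pi) *
     (LBINT r:{d/s..}. r\<^sup>2 * exp (- (r\<^sup>2) / 2) * gfun (d / (r * s)))"

end

theory Submission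
  imports Defs
begin

text \<open>In the coordinates \<open>l = u + v\<close> and \<open>\<delta> = v - u\<close> the squared quotient distance decouples:
  \<open>min\<^sub>\<tau> \<parallel>\<tau>\<cdot>x - m\<parallel>\<^sup>2 = (l\<^sub>x - l\<^sub>m)\<^sup>2/2 + (\<bar>\<delta>\<^sub>x\<bar> - \<bar>\<delta>\<^sub>m\<bar>)\<^sup>2/2\<close>. Hence
  \<open>F(m) = C + (l\<^sub>m - E l\<^sub>X)\<^sup>2/2 + (\<bar>\<delta>\<^sub>m\<bar> - E\<bar>\<delta>\<^sub>X\<bar>)\<^sup>2/2\<close>, so the Frechet means are exactly
  the \<open>m\<close> with \<open>l\<^sub>m = E l\<^sub>X\<close> and \<open>\<bar>\<delta>\<^sub>m\<bar> = E\<bar>\<delta>\<^sub>X\<bar>\<close>: they exist, form a single orbit, and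
  one of them lies on the perpendicular to \<open>L\<close> through \<open>E X\<close>. The mean \<open>E X\<close> is among them iff
  \<open>\<bar>E \<delta>\<^sub>X\<bar> = E\<bar>\<delta>\<^sub>X\<bar>\<close>, i.e. iff \<open>\<delta>\<^sub>X\<close> almost surely has the sign of \<open>E \<delta>\<^sub>X\<close>.

  For \<open>X \<sim> N(t\<^sub>0, s\<^sup>2 Id)\<close> we have \<open>\<delta>\<^sub>X \<sim> N(\<delta>, \<sigma>\<^sup>2)\<close> with \<open>\<sigma> = \<surd>2 s\<close>, and
  \<open>E\<bar>\<delta>\<^sub>X\<bar> = \<bar>\<delta>\<bar> + 2\<sigma> \<Psi>(\<bar>\<delta>\<bar>/\<sigma>)\<close> for the normal loss function \<open>\<Psi>(a) = E (Z - a)\<^sup>+\<close>; so the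
  bias is \<open>2s \<Psi>(d/s)\<close>. Writing \<open>r\<^sup>2 g(a/r)\<close> as an integral over \<open>w \<in> (a, r)\<close> and exchanging the
  order of integration turns the integral defining \<open>\<rho>\<close> into \<open>\<pi> \<Psi>(a)\<close>. The asymptotics follow
  from \<open>\<phi>(a) - a \<le> \<Psi>(a) \<le> \<phi>(a)\<close>.\<close>

section \<open>Geometry of the quotient\<close>

lemma Min_range_bool: "Min (range (f::bool \<Rightarrow> 'a::linorder)) = min (f False) (f True)"
proof -
  have "range f = {f False, f True}" by (auto simp: UNIV_bool)
  then show ?thesis by simp
qed

lemma min_square_diff_sum: "min ((p-q)\<^sup>2) ((p+q)\<^sup>2) = (\<bar>p\<bar>-\<bar>q\<bar>)\<^sup>2" for p q :: real
proof -
  have d: "(p+q)\<^sup>2 - (p-q)\<^sup>2 = 4*(p*q)" by (simp add: power2_eq_square algebra_simps)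
  show ?thesis
  proof (cases "p*q \<ge> 0")
    case True
    then have "(p-q)\<^sup>2 \<le> (p+q)\<^sup>2" using d by linarith
    moreover have "(\<bar>p\<bar>-\<bar>q\<bar>)\<^sup>2 = (p-q)\<^sup>2" using True
      by (cases "p \<ge> 0"; cases "q \<ge> 0") (auto simp: power2_eq_square algebra_simps mult_le_0_iff zero_le_mult_iff)
    ultimately show ?thesis by (simp add: min_def)
  next
    case False
    then have "\<not> (p-q)\<^sup>2 \<le> (p+q)\<^sup>2" using d by linarith
    moreover have "(\<bar>p\<bar>-\<bar>q\<bar>)\<^sup>2 = (p+q)\<^sup>2" using False
      by (cases "p \<ge> 0"; cases "q \<ge> 0") (auto simp: power2_eq_square algebra_simps mult_le_0_iff zero_le_mult_iff)
    ultimately show ?thesis by (simp add: min_def)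
  qed
qed

lemma Min_orbit_sqdist:
  "Min (range (\<lambda>\<tau>. (norm (z2act \<tau> x - m))\<^sup>2)) =
    ((fst x + snd x) - (fst m + snd m))\<^sup>2/2 + (\<bar>snd x - fst x\<bar> - \<bar>snd m - fst m\<bar>)\<^sup>2/2"
proof -
  obtain x1 x2 m1 m2 where x: "x = (x1,x2)" and m: "m = (m1,m2)" by (cases x, cases m)
  have n: "(norm (p::real\<times>real))\<^sup>2 = (fst p)\<^sup>2 + (snd p)\<^sup>2" for p
    by (cases p) (simp add: norm_Pair)
  have id: "(x1-m1)\<^sup>2 + (x2-m2)\<^sup>2 = ((x1+x2)-(m1+m2))\<^sup>2/2 + ((x2-x1)-(m2-m1))\<^sup>2/2"
    by (simp add: power2_eq_square field_simps)
  have swap: "(x2-m1)\<^sup>2 + (x1-m2)\<^sup>2 = ((x1+x2)-(m1+m2))\<^sup>2/2 + ((x2-x1)+(m2-m1))\<^sup>2/2"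
    by (simp add: power2_eq_square field_simps)
  have "min ((x1-m1)\<^sup>2 + (x2-m2)\<^sup>2) ((x2-m1)\<^sup>2 + (x1-m2)\<^sup>2)
     = ((x1+x2)-(m1+m2))\<^sup>2/2 + min (((x2-x1)-(m2-m1))\<^sup>2) (((x2-x1)+(m2-m1))\<^sup>2)/2"
    unfolding id swap by (simp add: min_def)
  then show ?thesis unfolding Min_range_bool x m min_square_diff_sum by (simp add: n)
qed

lemma dQ_eq_abs_diff:
  assumes "fst a + snd a = fst b + snd b"
  shows "dQ a b = \<bar>\<bar>snd a - fst a\<bar> - \<bar>snd b - fst b\<bar>\<bar> / sqrt 2"
proof -
  have sq: "Min (range (\<lambda>\<tau>. (norm (z2act \<tau> a - b))\<^sup>2)) = (dQ a b)\<^sup>2"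
    unfolding dQ_def Min_range_bool by (simp add: min_def power_mono)
  have "(dQ a b)\<^sup>2 = (\<bar>snd a - fst a\<bar> - \<bar>snd b - fst b\<bar>)\<^sup>2/2"
    unfolding sq[symmetric] Min_orbit_sqdist using assms by simp
  moreover have "dQ a b \<ge> 0" unfolding dQ_def Min_range_bool by simp
  ultimately have "dQ a b = sqrt ((\<bar>snd a - fst a\<bar> - \<bar>snd b - fst b\<bar>)\<^sup>2/2)"
    by (metis real_sqrt_abs abs_of_nonneg)
  then show ?thesis by (simp add: real_sqrt_divide)
qed

lemma orbit_Pair: "orbit (a, b) = {(a, b), (b, a)}"
  unfolding orbit_def by (auto simp: UNIV_bool)

lemma dist_diag_sq: "(dist t (v, v))\<^sup>2 = (snd t - fst t)\<^sup>2 / 2 + (fst t + snd t - 2 * v)\<^sup>2 / 2"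
proof -
  have "(dist t (v, v))\<^sup>2 = (fst t - v)\<^sup>2 + (snd t - v)\<^sup>2"
    by (cases t) (simp add: dist_Pair_Pair dist_real_def)
  then show ?thesis by (simp add: power2_eq_square field_simps)
qed

lemma infdist_Lline: "infdist t Lline = \<bar>snd t - fst t\<bar> / sqrt 2"
proof (rule antisym)
  define u where "u = (fst t + snd t)/2"
  have "(u,u) \<in> Lline" by (auto simp: Lline_def)
  then have "infdist t Lline \<le> dist t (u,u)" by (rule infdist_le)
  also have "dist t (u,u) = sqrt ((dist t (u,u))\<^sup>2)" by simp
  also have "\<dots> = \<bar>snd t - fst t\<bar> / sqrt 2"
  proof -
    have "fst t + snd t - 2 * u = 0" unfolding u_def by simp
    then show ?thesis unfolding dist_diag_sq by (simp add: real_sqrt_divide)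
  qed
  finally show "infdist t Lline \<le> \<bar>snd t - fst t\<bar> / sqrt 2" .
next
  have ne: "Lline \<noteq> {}" by (auto simp: Lline_def)
  show "\<bar>snd t - fst t\<bar> / sqrt 2 \<le> infdist t Lline"
    unfolding infdist_notempty[OF ne]
  proof (rule cINF_greatest[OF ne])
    fix p assume "p \<in> Lline"
    then obtain v where p: "p = (v,v)" by (auto simp: Lline_def)
    have "sqrt ((snd t - fst t)\<^sup>2 / 2) \<le> sqrt ((dist t p)\<^sup>2)"
      unfolding p dist_diag_sq by (intro real_sqrt_le_mono) simp
    then show "\<bar>snd t - fst t\<bar> / sqrt 2 \<le> dist t p" by (simp add: real_sqrt_divide)
  qed
qed

lemma Lline_iff: "x \<in> Lline \<longleftrightarrow> snd x - fst x = 0"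
  by (cases x) (auto simp: Lline_def)
lemma HPA_iff: "x \<in> HPA \<longleftrightarrow> snd x - fst x > 0"
  by (cases x) (auto simp: HPA_def)
lemma HPB_iff: "x \<in> HPB \<longleftrightarrow> snd x - fst x < 0"
  by (cases x) (auto simp: HPB_def)
lemma HPA_Un_Lline_iff: "x \<in> HPA \<union> Lline \<longleftrightarrow> snd x - fst x \<ge> 0"
  by (cases x) (auto simp: Lline_def HPA_def)
lemma HPB_Un_Lline_iff: "x \<in> HPB \<union> Lline \<longleftrightarrow> snd x - fst x \<le> 0"
  by (cases x) (auto simp: Lline_def HPB_def)

section \<open>The Frechet function\<close>

lemma integral_abs_eq_integral_iff_AE_nonneg:
  fixes f :: "'a \<Rightarrow> real"
  assumes "integrable M f"
  shows "(\<integral>x. \<bar>f x\<bar> \<partial>M) = (\<integral>x. f x \<partial>M) \<longleftrightarrow> (AE x in M. 0 \<le> f x)"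
proof -
  have "(\<integral>x. \<bar>f x\<bar> \<partial>M) - (\<integral>x. f x \<partial>M) = (\<integral>x. \<bar>f x\<bar> - f x \<partial>M)"
    using assms by simp
  then have "(\<integral>x. \<bar>f x\<bar> \<partial>M) = (\<integral>x. f x \<partial>M) \<longleftrightarrow> (\<integral>x. \<bar>f x\<bar> - f x \<partial>M) = 0" by linarith
  also have "\<dots> \<longleftrightarrow> (AE x in M. \<bar>f x\<bar> - f x = 0)"
    by (rule integral_nonneg_eq_0_iff_AE) (use assms in auto)
  also have "\<dots> \<longleftrightarrow> (AE x in M. 0 \<le> f x)"
    by (rule arg_cong[where f="almost_everywhere M"]) (auto simp: abs_if)
  finally show ?thesis .
qed

locale Z2_frechet = prob_space M for M :: "'w measure" +
  fixes X :: "'w \<Rightarrow> real \<times> real"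
  assumes X_measurable[measurable]: "X \<in> borel_measurable M"
    and square_integrable: "integrable M (\<lambda>\<omega>. (norm (X \<omega>))\<^sup>2)"
begin

definition sum_coord :: "'w \<Rightarrow> real" where
  "sum_coord \<omega> = fst (X \<omega>) + snd (X \<omega>)"

definition diff_coord :: "'w \<Rightarrow> real" where
  "diff_coord \<omega> = snd (X \<omega>) - fst (X \<omega>)"

definition mean_sum :: real where
  "mean_sum = expectation sum_coord"

definition mean_abs_diff :: real where
  "mean_abs_diff = expectation (\<lambda>\<omega>. \<bar>diff_coord \<omega>\<bar>)"

definition frechet_min :: real where
  "frechet_min = (expectation (\<lambda>\<omega>. (sum_coord \<omega>)\<^sup>2) - mean_sum\<^sup>2
                 + expectation (\<lambda>\<omega>. (diff_coord \<omega>)\<^sup>2) - mean_abs_diff\<^sup>2) / 2"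

definition frechet_rep :: "real \<times> real" where
  "frechet_rep = ((mean_sum - mean_abs_diff) / 2, (mean_sum + mean_abs_diff) / 2)"

lemma X_measurable_pair[measurable]: "X \<in> measurable M (borel \<Otimes>\<^sub>M borel)"
  using X_measurable by (simp add: borel_prod)

lemma sum_coord_measurable[measurable]: "sum_coord \<in> borel_measurable M"
  unfolding sum_coord_def[abs_def] by measurable

lemma diff_coord_measurable[measurable]: "diff_coord \<in> borel_measurable M"
  unfolding diff_coord_def[abs_def] by measurable

lemma integrable_bounded_by_norm_sq:
  assumes [measurable]: "f \<in> borel_measurable M"
    and "\<And>\<omega>. (f \<omega>)\<^sup>2 \<le> 2 * (norm (X \<omega>))\<^sup>2"
  shows "integrable M (\<lambda>\<omega>. (f \<omega>)\<^sup>2)"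
  by (rule Bochner_Integration.integrable_bound[OF integrable_mult_right[OF square_integrable, of 2]])
     (use assms(2) in \<open>auto intro!: AE_I2\<close>)

lemma norm_sq_Pair: "(norm (p :: real \<times> real))\<^sup>2 = (fst p)\<^sup>2 + (snd p)\<^sup>2"
  by (cases p) (simp add: norm_Pair)

lemma integrable_sum_coord_sq: "integrable M (\<lambda>\<omega>. (sum_coord \<omega>)\<^sup>2)"
proof (rule integrable_bounded_by_norm_sq)
  fix \<omega>
  have "0 \<le> (fst (X \<omega>) - snd (X \<omega>))\<^sup>2" by simp
  then show "(sum_coord \<omega>)\<^sup>2 \<le> 2 * (norm (X \<omega>))\<^sup>2"
    unfolding sum_coord_def norm_sq_Pair by (simp add: power2_eq_square algebra_simps)
qed simp

lemma integrable_diff_coord_sq: "integrable M (\<lambda>\<omega>. (diff_coord \<omega>)\<^sup>2)"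
proof (rule integrable_bounded_by_norm_sq)
  fix \<omega>
  have "0 \<le> (fst (X \<omega>) + snd (X \<omega>))\<^sup>2" by simp
  then show "(diff_coord \<omega>)\<^sup>2 \<le> 2 * (norm (X \<omega>))\<^sup>2"
    unfolding diff_coord_def norm_sq_Pair by (simp add: power2_eq_square algebra_simps)
qed simp

lemma integrable_sum_coord: "integrable M sum_coord"
  by (rule square_integrable_imp_integrable[OF sum_coord_measurable integrable_sum_coord_sq])

lemma integrable_diff_coord: "integrable M diff_coord"
  by (rule square_integrable_imp_integrable[OF diff_coord_measurable integrable_diff_coord_sq])

lemma frechetF_eq:
  "frechetF M X m = frechet_min + ((fst m + snd m) - mean_sum)\<^sup>2/2 + (\<bar>snd m - fst m\<bar> - mean_abs_diff)\<^sup>2/2"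
proof -
  let ?l = "fst m + snd m" and ?d = "\<bar>snd m - fst m\<bar>"
  have pointwise: "Min (range (\<lambda>\<tau>. (norm (z2act \<tau> (X \<omega>) - m))\<^sup>2)) =
     ((sum_coord \<omega>)\<^sup>2/2 + (diff_coord \<omega>)\<^sup>2/2) - (?l * sum_coord \<omega> + ?d * \<bar>diff_coord \<omega>\<bar>) + (?l\<^sup>2 + ?d\<^sup>2)/2" for \<omega>
    unfolding Min_orbit_sqdist sum_coord_def diff_coord_def by (simp add: power2_eq_square field_simps)
  have "frechetF M X m = expectation (\<lambda>\<omega>. ((sum_coord \<omega>)\<^sup>2/2 + (diff_coord \<omega>)\<^sup>2/2)
                               - (?l * sum_coord \<omega> + ?d * \<bar>diff_coord \<omega>\<bar>) + (?l\<^sup>2 + ?d\<^sup>2)/2)"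
    unfolding frechetF_def pointwise ..
  also have "\<dots> = (expectation (\<lambda>\<omega>. (sum_coord \<omega>)\<^sup>2)/2 + expectation (\<lambda>\<omega>. (diff_coord \<omega>)\<^sup>2)/2)
       - (?l * mean_sum + ?d * mean_abs_diff) + (?l\<^sup>2 + ?d\<^sup>2)/2"
    using integrable_sum_coord_sq integrable_diff_coord_sq integrable_sum_coord integrable_diff_coord
    unfolding mean_sum_def mean_abs_diff_def by (simp add: prob_space)
  also have "\<dots> = frechet_min + (?l - mean_sum)\<^sup>2/2 + (?d - mean_abs_diff)\<^sup>2/2"
    unfolding frechet_min_def by (simp add: power2_eq_square field_simps)
  finally show ?thesis .
qed

lemma mean_abs_diff_nonneg: "0 \<le> mean_abs_diff"
  unfolding mean_abs_diff_def by simp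

lemma frechet_mean_iff:
  "frechet_mean M X m \<longleftrightarrow> fst m + snd m = mean_sum \<and> \<bar>snd m - fst m\<bar> = mean_abs_diff"
proof
  assume "frechet_mean M X m"
  moreover have "frechetF M X frechet_rep = frechet_min"
    unfolding frechetF_eq frechet_rep_def using mean_abs_diff_nonneg by (simp add: field_simps)
  ultimately have "frechetF M X m \<le> frechet_min" unfolding frechet_mean_def by metis
  then have "((fst m + snd m) - mean_sum)\<^sup>2/2 + (\<bar>snd m - fst m\<bar> - mean_abs_diff)\<^sup>2/2 \<le> 0"
    unfolding frechetF_eq by simp
  moreover have "0 \<le> ((fst m + snd m) - mean_sum)\<^sup>2/2" "0 \<le> (\<bar>snd m - fst m\<bar> - mean_abs_diff)\<^sup>2/2"
    by auto
  ultimately have "((fst m + snd m) - mean_sum)\<^sup>2 = 0" "(\<bar>snd m - fst m\<bar> - mean_abs_diff)\<^sup>2 = 0"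
    by linarith+
  then show "fst m + snd m = mean_sum \<and> \<bar>snd m - fst m\<bar> = mean_abs_diff" by simp
next
  assume "fst m + snd m = mean_sum \<and> \<bar>snd m - fst m\<bar> = mean_abs_diff"
  then show "frechet_mean M X m"
    unfolding frechet_mean_def frechetF_eq by simp
qed

lemma frechet_mean_frechet_rep: "frechet_mean M X frechet_rep"
  unfolding frechet_mean_iff frechet_rep_def using mean_abs_diff_nonneg by (simp add: field_simps)

lemma frechet_mean_orbit_eq:
  assumes "frechet_mean M X m"
  shows "orbit m = orbit frechet_rep"
proof -
  have m: "fst m + snd m = mean_sum" "\<bar>snd m - fst m\<bar> = mean_abs_diff"
    using assms unfolding frechet_mean_iff by auto
  show ?thesis
  proof (cases "snd m - fst m \<ge> 0")
    case True
    then have "m = frechet_rep" using m unfolding frechet_rep_def by (cases m) (auto simp: field_simps)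
    then show ?thesis by simp
  next
    case False
    then have "m = (snd frechet_rep, fst frechet_rep)"
      using m unfolding frechet_rep_def by (cases m) (auto simp: field_simps)
    then show ?thesis unfolding frechet_rep_def by (simp add: orbit_Pair insert_commute)
  qed
qed

lemma integrable_X: "integrable M X"
proof -
  have "integrable M (\<lambda>\<omega>. norm (X \<omega>))"
    by (rule square_integrable_imp_integrable) (use square_integrable in auto)
  then show ?thesis
    by (rule Bochner_Integration.integrable_bound) auto
qed

lemma integrable_components: "integrable M (\<lambda>\<omega>. fst (X \<omega>))" "integrable M (\<lambda>\<omega>. snd (X \<omega>))"
  using integrable_bounded_linear[OF bounded_linear_fst integrable_X]
    integrable_bounded_linear[OF bounded_linear_snd integrable_X] by simp_all

lemma expectation_components:
  "fst (expectation X) = expectation (\<lambda>\<omega>. fst (X \<omega>))" "snd (expectation X) = expectation (\<lambda>\<omega>. snd (X \<omega>))"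
  using integral_bounded_linear[OF bounded_linear_fst integrable_X]
    integral_bounded_linear[OF bounded_linear_snd integrable_X] by simp_all

lemma sum_expectation: "fst (expectation X) + snd (expectation X) = mean_sum"
  unfolding mean_sum_def sum_coord_def[abs_def] expectation_components
  using integrable_components by simp

lemma diff_expectation: "snd (expectation X) - fst (expectation X) = expectation diff_coord"
  unfolding diff_coord_def[abs_def] expectation_components
  using integrable_components by simp

lemma frechet_rep_on_perpendicular: "\<exists>c. frechet_rep = expectation X + c *\<^sub>R (1, -1)"
proof
  show "frechet_rep = expectation X + (fst frechet_rep - fst (expectation X)) *\<^sub>R (1, -1)"
    using sum_expectation unfolding frechet_rep_def by (cases "expectation X") (auto simp: field_simps)
qed

lemma dQ_expectation_frechet_rep:
  "dQ (expectation X) frechet_rep = (mean_abs_diff - \<bar>expectation diff_coord\<bar>) / sqrt 2"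
proof -
  have "\<bar>expectation diff_coord\<bar> \<le> mean_abs_diff"
    unfolding mean_abs_diff_def using integral_abs_bound[of M diff_coord] by simp
  moreover have "fst (expectation X) + snd (expectation X) = fst frechet_rep + snd frechet_rep"
    using sum_expectation unfolding frechet_rep_def by (simp add: field_simps)
  moreover have "\<bar>snd frechet_rep - fst frechet_rep\<bar> = mean_abs_diff"
    unfolding frechet_rep_def using mean_abs_diff_nonneg by (simp add: field_simps)
  ultimately show ?thesis
    by (simp add: dQ_eq_abs_diff diff_expectation)
qed

lemma frechet_mean_expectation_iff:
  "frechet_mean M X (expectation X) \<longleftrightarrow> \<bar>expectation diff_coord\<bar> = mean_abs_diff"
  unfolding frechet_mean_iff sum_expectation diff_expectation by simp

lemma prob_diff_coord:
  assumes "\<And>x. x \<in> S \<longleftrightarrow> P (snd x - fst x)" and [measurable]: "Measurable.pred borel P"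
  shows "prob {\<omega> \<in> space M. X \<omega> \<in> S} = 1 \<longleftrightarrow> (AE \<omega> in M. P (diff_coord \<omega>))"
proof -
  have "{\<omega> \<in> space M. X \<omega> \<in> S} = {\<omega> \<in> space M. P (diff_coord \<omega>)}"
    unfolding assms(1) diff_coord_def by simp
  moreover have "{\<omega> \<in> space M. P (diff_coord \<omega>)} \<in> sets M" by measurable
  ultimately show ?thesis
    by (simp add: prob_eq_1)
qed

lemma frechet_mean_expectation_Lline:
  assumes "expectation X \<in> Lline"
  shows "frechet_mean M X (expectation X) \<longleftrightarrow> prob {\<omega> \<in> space M. X \<omega> \<in> Lline} = 1"
proof -
  have "expectation diff_coord = 0" using assms unfolding Lline_iff diff_expectation .
  then have "frechet_mean M X (expectation X) \<longleftrightarrow> (AE \<omega> in M. diff_coord \<omega> = 0)"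
    unfolding frechet_mean_expectation_iff mean_abs_diff_def
    using integral_nonneg_eq_0_iff_AE[of M "\<lambda>\<omega>. \<bar>diff_coord \<omega>\<bar>"] integrable_diff_coord by auto
  also have "\<dots> \<longleftrightarrow> prob {\<omega> \<in> space M. X \<omega> \<in> Lline} = 1"
    by (rule prob_diff_coord[OF Lline_iff, symmetric]) measurable
  finally show ?thesis .
qed

lemma frechet_mean_expectation_HPA:
  assumes "expectation X \<in> HPA"
  shows "frechet_mean M X (expectation X) \<longleftrightarrow> prob {\<omega> \<in> space M. X \<omega> \<in> HPA \<union> Lline} = 1"
proof -
  have pos: "expectation diff_coord > 0" using assms unfolding HPA_iff diff_expectation .
  have "frechet_mean M X (expectation X) \<longleftrightarrow> (AE \<omega> in M. 0 \<le> diff_coord \<omega>)"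
    unfolding frechet_mean_expectation_iff mean_abs_diff_def abs_of_pos[OF pos]
      eq_commute[of "expectation diff_coord"]
    by (rule integral_abs_eq_integral_iff_AE_nonneg[OF integrable_diff_coord])
  also have "\<dots> \<longleftrightarrow> prob {\<omega> \<in> space M. X \<omega> \<in> HPA \<union> Lline} = 1"
    by (rule prob_diff_coord[OF HPA_Un_Lline_iff, symmetric]) measurable
  finally show ?thesis .
qed

lemma frechet_mean_expectation_HPB:
  assumes "expectation X \<in> HPB"
  shows "frechet_mean M X (expectation X) \<longleftrightarrow> prob {\<omega> \<in> space M. X \<omega> \<in> HPB \<union> Lline} = 1"
proof -
  have "expectation diff_coord < 0" using assms unfolding HPB_iff diff_expectation .
  then have neg: "\<bar>expectation diff_coord\<bar> = expectation (\<lambda>\<omega>. - diff_coord \<omega>)" by simp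
  have abs: "mean_abs_diff = expectation (\<lambda>\<omega>. \<bar>- diff_coord \<omega>\<bar>)"
    unfolding mean_abs_diff_def by simp
  have "frechet_mean M X (expectation X) \<longleftrightarrow> (AE \<omega> in M. 0 \<le> - diff_coord \<omega>)"
    unfolding frechet_mean_expectation_iff neg abs eq_commute[of "expectation (\<lambda>\<omega>. - diff_coord \<omega>)"]
    by (rule integral_abs_eq_integral_iff_AE_nonneg) (use integrable_diff_coord in simp)
  also have "\<dots> \<longleftrightarrow> (AE \<omega> in M. diff_coord \<omega> \<le> 0)" by simp
  also have "\<dots> \<longleftrightarrow> prob {\<omega> \<in> space M. X \<omega> \<in> HPB \<union> Lline} = 1"
    by (rule prob_diff_coord[OF HPB_Un_Lline_iff, symmetric]) measurable
  finally show ?thesis .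
qed

end

section \<open>The normal loss function\<close>

definition normal_loss :: "real \<Rightarrow> real" where
  "normal_loss a = (LBINT w:{a<..}. (w - a) * std_normal_density w)"

lemma integrable_normal_loss_integrand: "integrable lborel (\<lambda>w. (w - a) * std_normal_density w)"
proof -
  have "integrable lborel (\<lambda>w. std_normal_density w * w ^ 1 - a * std_normal_density w)"
    using integrable_std_normal_moment[of 1] integrable_normal_density[of 0 1] by auto
  then show ?thesis by (simp add: algebra_simps)
qed

lemma set_integrable_normal_loss_integrand: "set_integrable lborel {a<..} (\<lambda>w. (w - a) * std_normal_density w)"
  unfolding set_integrable_def using integrable_mult_indicator[OF _ integrable_normal_loss_integrand, of "{a<..}"] by simp

lemma normal_loss_nonneg: "0 \<le> normal_loss a"
  unfolding normal_loss_def set_lebesgue_integral_def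
  by (rule Bochner_Integration.integral_nonneg) (auto simp: indicator_def)

lemma std_normal_density_minus: "std_normal_density (- x) = std_normal_density x"
  unfolding std_normal_density_def by simp

lemma integral_abs_shift_std_normal: assumes a: "0 \<le> a"
  shows "(\<integral>z. \<bar>a + z\<bar> * std_normal_density z \<partial>lborel) = a + 2 * normal_loss a"
proof -
  define f where "f z = indicator {..< -a} z * ((- a - z) * std_normal_density z)" for z :: real
  have i1: "integrable lborel (\<lambda>z. (a + z) * std_normal_density z)"
    using integrable_normal_loss_integrand[of "-a"] by (simp add: add.commute)
  have i2: "integrable lborel f"
  proof -
    have "integrable lborel (\<lambda>z. - ((z - (-a)) * std_normal_density z))"
      using integrable_normal_loss_integrand[of "-a"] by simp
    from integrable_mult_indicator[OF _ this, of "{..< -a}"]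
    have "integrable lborel (\<lambda>z. indicator {..< -a} z *\<^sub>R (- ((z - (-a)) * std_normal_density z)))" by simp
    moreover have "(\<lambda>z. indicator {..< -a} z *\<^sub>R (- ((z - (-a)) * std_normal_density z))) = f"
      unfolding f_def by (rule ext) (simp add: algebra_simps)
    ultimately show ?thesis by metis
  qed
  have pw: "\<bar>a + z\<bar> * std_normal_density z = (a + z) * std_normal_density z + 2 * f z" for z
    unfolding f_def by (auto simp: indicator_def abs_if algebra_simps)
  have e1: "(\<integral>z. (a + z) * std_normal_density z \<partial>lborel) = a"
  proof -
    have "(\<integral>z. (a + z) * std_normal_density z \<partial>lborel) = (\<integral>z. a * std_normal_density z + std_normal_density z * z ^ 1 \<partial>lborel)"
      by (simp add: algebra_simps)
    also have "\<dots> = a * 1 + 0"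
      using integrable_std_normal_moment[of 1] integral_std_normal_moment_odd[of 0]
      by (subst Bochner_Integration.integral_add) auto
    finally show ?thesis by simp
  qed
  have e2: "(\<integral>z. f z \<partial>lborel) = normal_loss a"
  proof -
    have "(\<integral>z. f z \<partial>lborel) = \<bar>-1\<bar> *\<^sub>R (\<integral>z. f (0 + (-1) * z) \<partial>lborel)"
      by (rule lborel_integral_real_affine) simp
    also have "(\<lambda>z. f (0 + (-1) * z)) = (\<lambda>z. indicator {a<..} z *\<^sub>R ((z - a) * std_normal_density z))"
      unfolding f_def by (auto simp: indicator_def std_normal_density_minus)
    finally show ?thesis unfolding normal_loss_def set_lebesgue_integral_def by simp
  qed
  have "(\<integral>z. \<bar>a + z\<bar> * std_normal_density z \<partial>lborel) = (\<integral>z. (a + z) * std_normal_density z + 2 * f z \<partial>lborel)"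
    unfolding pw ..
  also have "\<dots> = a + 2 * normal_loss a"
    using i1 i2 e1 e2 by (subst Bochner_Integration.integral_add) auto
  finally show ?thesis .
qed

lemma integral_abs_normal:
  assumes s: "0 < \<sigma>"
  shows "(\<integral>x. normal_density \<mu> \<sigma> x * \<bar>x\<bar> \<partial>lborel) = \<bar>\<mu>\<bar> + 2 * \<sigma> * normal_loss (\<bar>\<mu>\<bar> / \<sigma>)"
proof -
  define c where "c = (if 0 \<le> \<mu> then \<sigma> else - \<sigma>)"
  have c0: "c \<noteq> 0" and cabs: "\<bar>c\<bar> = \<sigma>" and csq: "c\<^sup>2 = \<sigma>\<^sup>2" using s by (auto simp: c_def)
  define a where "a = \<bar>\<mu>\<bar> / \<sigma>"
  have a0: "0 \<le> a" unfolding a_def using s by simp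
  have "(\<integral>x. normal_density \<mu> \<sigma> x * \<bar>x\<bar> \<partial>lborel) = \<bar>c\<bar> *\<^sub>R (\<integral>z. normal_density \<mu> \<sigma> (\<mu> + c * z) * \<bar>\<mu> + c * z\<bar> \<partial>lborel)"
    by (rule lborel_integral_real_affine[OF c0])
  also have "(\<lambda>z. normal_density \<mu> \<sigma> (\<mu> + c * z) * \<bar>\<mu> + c * z\<bar>) = (\<lambda>z. \<bar>a + z\<bar> * std_normal_density z)"
  proof
    fix z
    have n: "normal_density \<mu> \<sigma> (\<mu> + c * z) = std_normal_density z / \<sigma>"
      unfolding normal_density_def using s csq
      by (simp add: power_mult_distrib real_sqrt_mult field_simps)
    have m: "\<bar>\<mu> + c * z\<bar> = \<sigma> * \<bar>a + z\<bar>"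
      unfolding a_def c_def using s by (auto simp: abs_if field_simps)
    show "normal_density \<mu> \<sigma> (\<mu> + c * z) * \<bar>\<mu> + c * z\<bar> = \<bar>a + z\<bar> * std_normal_density z"
      unfolding n m using s by simp
  qed
  finally show ?thesis using integral_abs_shift_std_normal[OF a0] cabs s unfolding a_def by (simp add: field_simps)
qed

lemma set_integral_Ioi_std_normal_moment_1: assumes a: "0 \<le> a"
  shows "(LBINT u:{a<..}. u * std_normal_density u) = std_normal_density a"
proof -
  define F where "F u = - std_normal_density u" for u
  have d: "\<And>x. ereal a < ereal x \<Longrightarrow> ereal x < \<infinity> \<Longrightarrow> DERIV F x :> x * std_normal_density x"
    unfolding F_def std_normal_density_def
    by (auto intro!: derivative_eq_intros simp: field_simps power2_eq_square)
  have c: "\<And>x. ereal a < ereal x \<Longrightarrow> ereal x < \<infinity> \<Longrightarrow> isCont (\<lambda>x. x * std_normal_density x) x"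
    unfolding std_normal_density_def by (auto intro!: continuous_intros)
  have nn: "AE x in lborel. ereal a < ereal x \<longrightarrow> ereal x < \<infinity> \<longrightarrow> 0 \<le> x * std_normal_density x"
    using a by (auto intro!: AE_I2 mult_nonneg_nonneg)
  have A: "((F \<circ> real_of_ereal) \<longlongrightarrow> F a) (at_right (ereal a))"
    unfolding ereal_tendsto_simps F_def std_normal_density_def
    by (intro tendsto_intros) auto
  have B: "((F \<circ> real_of_ereal) \<longlongrightarrow> 0) (at_left \<infinity>)"
    unfolding ereal_tendsto_simps F_def std_normal_density_def
    by real_asymp
  have "(LBINT x=ereal a..\<infinity>. x * std_normal_density x) = 0 - F a"
    using interval_integral_FTC_nonneg[OF _ d c nn A B] by simp
  then show ?thesis by (simp add: interval_integral_Ioi F_def)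
qed

definition normal_tail :: "real \<Rightarrow> real" where "normal_tail a = (LBINT u:{a<..}. std_normal_density u)"

lemma normal_tail_bounds: "0 \<le> normal_tail a" "normal_tail a \<le> 1"
proof -
  show "0 \<le> normal_tail a" unfolding normal_tail_def set_lebesgue_integral_def
    by (rule Bochner_Integration.integral_nonneg) (auto simp: indicator_def)
  have I: "integrable lborel (\<lambda>u. indicator {a<..} u *\<^sub>R std_normal_density u)"
    by (rule integrable_mult_indicator) auto
  have "normal_tail a \<le> (\<integral>u. std_normal_density u \<partial>lborel)"
    unfolding normal_tail_def set_lebesgue_integral_def
    by (rule integral_mono[OF I]) (auto simp: indicator_def)
  then show "normal_tail a \<le> 1" by simp
qed

lemma normal_loss_eq: assumes a: "0 \<le> a" shows "normal_loss a = std_normal_density a - a * normal_tail a"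
proof -
  have i1: "set_integrable lborel {a<..} (\<lambda>u. u * std_normal_density u)"
    unfolding set_integrable_def
    using integrable_mult_indicator[OF _ integrable_std_normal_moment[of 1], of "{a<..}"] by (simp add: mult_ac)
  have i2: "set_integrable lborel {a<..} (\<lambda>u. a * std_normal_density u)"
  proof -
    have "set_integrable lborel {a<..} std_normal_density"
      unfolding set_integrable_def by (rule integrable_mult_indicator) auto
    then show ?thesis by (rule set_integrable_mult_right)
  qed
  have "normal_loss a = (LBINT u:{a<..}. u * std_normal_density u - a * std_normal_density u)"
    unfolding normal_loss_def by (simp add: algebra_simps)
  also have "\<dots> = (LBINT u:{a<..}. u * std_normal_density u) - (LBINT u:{a<..}. a * std_normal_density u)"
    by (rule set_integral_diff(2)[OF i1 i2])
  also have "\<dots> = std_normal_density a - a * normal_tail a"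
    unfolding set_integral_Ioi_std_normal_moment_1[OF a] normal_tail_def by (simp add: set_integral_mult_right)
  finally show ?thesis .
qed

lemma normal_loss_le: "0 \<le> a \<Longrightarrow> normal_loss a \<le> std_normal_density a"
  using normal_loss_eq normal_tail_bounds[of a] by (simp add: mult_nonneg_nonneg)

lemma normal_loss_ge: "0 \<le> a \<Longrightarrow> std_normal_density a - a \<le> normal_loss a"
  using normal_loss_eq normal_tail_bounds[of a] by (simp add: mult_left_le)

lemma normal_loss_0: "normal_loss 0 = std_normal_density 0"
  using normal_loss_eq[of 0] by simp

lemma normal_loss_0_pos: "0 < normal_loss 0"
  unfolding normal_loss_0 std_normal_density_def by simp

section \<open>The integral formula for the bias\<close>

lemma gfun_nonneg: assumes "0 \<le> x" "x \<le> 1" shows "0 \<le> gfun x"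
proof -
  define \<theta> where "\<theta> = arccos x"
  have th: "0 \<le> \<theta>" "\<theta> \<le> pi/2" unfolding \<theta>_def using assms arccos_lbound arccos_le_pi2 by auto
  have g: "gfun x = sin \<theta> - \<theta> * cos \<theta>" unfolding gfun_def \<theta>_def using assms by simp
  have "(\<lambda>t. sin t - t * cos t) 0 \<le> (\<lambda>t. sin t - t * cos t) \<theta>"
  proof (rule DERIV_nonneg_imp_increasing_open[OF th(1)])
    fix t assume t: "0 < t" "t < \<theta>"
    have "((\<lambda>t. sin t - t * cos t) has_real_derivative t * sin t) (at t)"
      by (auto intro!: derivative_eq_intros)
    moreover have "0 \<le> t * sin t" using t th by (intro mult_nonneg_nonneg sin_ge_zero) auto
    ultimately show "\<exists>y. ((\<lambda>t. sin t - t * cos t) has_real_derivative y) (at t) \<and> 0 \<le> y" by blast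
  qed (auto intro!: continuous_intros)
  then show ?thesis using g by simp
qed

lemma has_bochner_integral_half_gauss: "has_bochner_integral lborel (\<lambda>t. indicator {0<..} t * exp (- t\<^sup>2/2)) (sqrt (pi/2))"
proof -
  have h: "has_bochner_integral lborel (\<lambda>x. indicator {0..} x *\<^sub>R exp (- x\<^sup>2)) (sqrt pi / 2)"
    by (rule gaussian_moment_0)
  let ?c = "1 / sqrt 2 :: real"
  have c: "?c \<noteq> 0" by simp
  have "has_bochner_integral lborel (\<lambda>t. indicator {0..} (0 + ?c * t) *\<^sub>R exp (- (0 + ?c * t)\<^sup>2)) (sqrt pi / 2 /\<^sub>R \<bar>?c\<bar>)"
    using h lborel_has_bochner_integral_real_affine_iff[OF c, of "\<lambda>x. indicator {0..} x *\<^sub>R exp (- x\<^sup>2)" "sqrt pi / 2" 0]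
    by simp
  moreover have "(\<lambda>t. indicator {0..} (0 + ?c * t) *\<^sub>R exp (- (0 + ?c * t)\<^sup>2)) = (\<lambda>t. indicator {0..} t * exp (- t\<^sup>2/2))"
    by (auto simp: indicator_def power_divide zero_le_divide_iff)
  moreover have "sqrt pi / 2 /\<^sub>R \<bar>?c\<bar> = sqrt (pi/2)"
    by (simp add: real_sqrt_divide field_simps)
  ultimately have "has_bochner_integral lborel (\<lambda>t. indicator {0..} t * exp (- t\<^sup>2/2)) (sqrt (pi/2))"
    by simp
  moreover have "AE t in lborel. indicator {0..} t * exp (- t\<^sup>2/2) = indicator {0<..} t * exp (- t\<^sup>2/2 :: real)"
    using AE_lborel_singleton[of 0] by eventually_elim (auto simp: indicator_def)
  ultimately show ?thesis by (subst has_bochner_integral_cong_AE[symmetric]) (auto simp del: has_bochner_integral_iff)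
qed

lemma interval_integral_half_gauss:
  shows "set_integrable lborel (einterval 0 \<infinity>) (\<lambda>t. c * exp (- t\<^sup>2/2))"
    and "(LBINT t=0..\<infinity>. c * exp (- t\<^sup>2/2)) = c * sqrt (pi/2)"
proof -
  have i: "integrable lborel (\<lambda>t. indicator {0<..} t * exp (- t\<^sup>2/2) :: real)"
    and v: "(\<integral>t. indicator {0<..} t * exp (- t\<^sup>2/2) \<partial>lborel) = sqrt (pi/2)"
    using has_bochner_integral_half_gauss by (simp_all add: has_bochner_integral_iff)
  have "integrable lborel (\<lambda>t. c * (indicator {0<..} t * exp (- t\<^sup>2/2)) :: real)"
    using i by simp
  then show "set_integrable lborel (einterval 0 \<infinity>) (\<lambda>t. c * exp (- t\<^sup>2/2))"
    unfolding set_integrable_def by (simp add: zero_ereal_def mult_ac)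
  have "(LBINT t=0..\<infinity>. c * exp (- t\<^sup>2/2)) = c * (\<integral>t. indicator {0<..} t * exp (- t\<^sup>2/2) \<partial>lborel)"
    by (simp add: interval_lebesgue_integral_def set_lebesgue_integral_def zero_ereal_def)
  then show "(LBINT t=0..\<infinity>. c * exp (- t\<^sup>2/2)) = c * sqrt (pi/2)"
    unfolding v .
qed

lemma tendsto_sqrt_sq_add_ereal:
  fixes w :: real assumes "0 \<le> w"
  shows "((ereal \<circ> (\<lambda>t. sqrt (w\<^sup>2 + t\<^sup>2)) \<circ> real_of_ereal) \<longlongrightarrow> ereal w) (at_right 0)"
    and "((ereal \<circ> (\<lambda>t. sqrt (w\<^sup>2 + t\<^sup>2)) \<circ> real_of_ereal) \<longlongrightarrow> \<infinity>) (at_left \<infinity>)"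
proof -
  have "((\<lambda>t. sqrt (w\<^sup>2 + t\<^sup>2)) \<longlongrightarrow> sqrt (w\<^sup>2 + 0\<^sup>2)) (at_right 0)"
    by (intro tendsto_intros)
  then show "((ereal \<circ> (\<lambda>t. sqrt (w\<^sup>2 + t\<^sup>2)) \<circ> real_of_ereal) \<longlongrightarrow> ereal w) (at_right 0)"
    unfolding zero_ereal_def ereal_tendsto_simps o_assoc[symmetric] using assms by (simp add: comp_def)
  have "filterlim (\<lambda>t. sqrt (w\<^sup>2 + t\<^sup>2)) at_top at_top"
    by (rule filterlim_at_top_mono[OF filterlim_ident])
       (intro always_eventually allI real_le_rsqrt, simp)
  then show "((ereal \<circ> (\<lambda>t. sqrt (w\<^sup>2 + t\<^sup>2)) \<circ> real_of_ereal) \<longlongrightarrow> \<infinity>) (at_left \<infinity>)"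
    unfolding ereal_tendsto_simps o_assoc[symmetric]
    by (simp add: comp_def at_left_PInf filterlim_filtermap)
qed

text \<open>Substituting \<open>r = \<surd>(w\<^sup>2 + t\<^sup>2)\<close> turns the integrand into \<open>exp (- w\<^sup>2/2) exp (- t\<^sup>2/2)\<close>.\<close>

lemma integral_gauss_radial:
  fixes w :: real assumes w: "0 < w"
  defines "k \<equiv> \<lambda>r. r * exp (- r\<^sup>2/2) / sqrt (r\<^sup>2 - w\<^sup>2)"
  shows "set_integrable lborel {w<..} k" "(LBINT r:{w<..}. k r) = sqrt (pi/2) * exp (- w\<^sup>2/2)"
proof -
  define g where "g t = sqrt (w\<^sup>2 + t\<^sup>2)" for t :: real
  define g' where "g' t = t / sqrt (w\<^sup>2 + t\<^sup>2)" for t :: real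
  have gpos: "0 < w\<^sup>2 + t\<^sup>2" for t using w by (simp add: add_pos_nonneg)
  have deriv: "DERIV g t :> g' t" for t
    unfolding g_def g'_def using gpos[of t]
    by (auto intro!: derivative_eq_intros simp: field_simps power2_eq_square)
  have kg: "k (g t) * g' t = exp (- w\<^sup>2/2) * exp (- t\<^sup>2/2)" if t: "0 < t" for t
  proof -
    have gsq: "(g t)\<^sup>2 = w\<^sup>2 + t\<^sup>2" unfolding g_def using gpos[of t] by simp
    have "sqrt ((g t)\<^sup>2 - w\<^sup>2) = t" unfolding gsq using t by simp
    moreover have "g t > 0" unfolding g_def using gpos[of t] by simp
    ultimately have "k (g t) * g' t = exp (- (g t)\<^sup>2/2)"
      unfolding k_def g'_def g_def[symmetric] using t by (simp add: field_simps)
    also have "\<dots> = exp (- w\<^sup>2/2) * exp (- t\<^sup>2/2)" unfolding gsq by (simp add: exp_add[symmetric] field_simps)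
    finally show ?thesis .
  qed
  have "set_integrable lborel (einterval 0 \<infinity>) (\<lambda>t. k (g t) * g' t)
      = set_integrable lborel (einterval 0 \<infinity>) (\<lambda>t. exp (- w\<^sup>2/2) * exp (- t\<^sup>2/2))"
    by (rule set_integrable_cong) (auto simp: kg einterval_iff zero_ereal_def)
  then have substituted_integrable: "set_integrable lborel (einterval 0 \<infinity>) (\<lambda>t. k (g t) * g' t)"
    using interval_integral_half_gauss(1)[of 1] by simp
  have contk: "isCont k (g t)" if t: "0 < t" for t
  proof -
    have "(g t)\<^sup>2 - w\<^sup>2 > 0" unfolding g_def using gpos[of t] t by simp
    then show ?thesis unfolding k_def by (auto intro!: continuous_intros)
  qed
  have c1: "isCont g' x" for x unfolding g'_def using gpos[of x] by (auto intro!: continuous_intros)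
  have c2: "0 \<le> k (g x)" if "0 < x" for x
    unfolding k_def g_def using that by simp
  have c3: "0 \<le> g' x" if "0 \<le> x" for x unfolding g'_def using that by simp
  have sub: "set_integrable lborel (einterval w \<infinity>) k \<and> (LBINT x=ereal w..\<infinity>. k x) = (LBINT x=0..\<infinity>. k (g x) * g' x)"
    using interval_integral_substitution_nonneg[of 0 \<infinity> g g' k w \<infinity>, OF _ deriv _ _ _ _ _ _ substituted_integrable]
      tendsto_sqrt_sq_add_ereal[of w] w contk c1 c2 c3 unfolding g_def[abs_def] by (auto simp: zero_ereal_def)
  show "set_integrable lborel {w<..} k" using sub by simp
  have "(LBINT x=0..\<infinity>. k (g x) * g' x) = (LBINT t=0..\<infinity>. exp (- w\<^sup>2/2) * exp (- t\<^sup>2/2))"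
    by (rule interval_integral_cong) (auto simp: kg einterval_iff zero_ereal_def)
  also have "\<dots> = exp (- w\<^sup>2/2) * sqrt (pi/2)"
    by (rule interval_integral_half_gauss(2))
  finally show "(LBINT r:{w<..}. k r) = sqrt (pi/2) * exp (- w\<^sup>2/2)"
    using sub by (simp add: interval_integral_Ioi mult.commute)
qed

lemma sqrt_one_minus_sq_div: assumes "0 < r" shows "sqrt (1 - (w/r)\<^sup>2) = sqrt (r\<^sup>2 - w\<^sup>2) / r"
proof -
  have "1 - (w/r)\<^sup>2 = (r\<^sup>2 - w\<^sup>2) / r\<^sup>2" using assms by (simp add: field_simps power2_eq_square)
  then show ?thesis using assms by (simp add: real_sqrt_divide)
qed

definition gfun_primitive :: "real \<Rightarrow> real \<Rightarrow> real \<Rightarrow> real" where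
  "gfun_primitive a r w = - r * sqrt (r\<^sup>2 - w\<^sup>2) - a * r * arcsin (w/r)"

lemma has_real_derivative_gfun_primitive:
  fixes a r w :: real assumes r: "0 < r" and w: "\<bar>w\<bar> < r"
  shows "(gfun_primitive a r has_real_derivative (w - a) * r / sqrt (r\<^sup>2 - w\<^sup>2)) (at w)"
proof -
  have "\<bar>w\<bar>\<^sup>2 < r\<^sup>2" using w by (intro power_strict_mono) auto
  then have pos: "0 < r\<^sup>2 - w\<^sup>2" by simp
  have wr: "-1 < w/r" "w/r < 1" using w r by (auto simp: field_simps abs_less_iff)
  have d1: "((\<lambda>w. arcsin (w/r)) has_real_derivative inverse (sqrt (1 - (w/r)\<^sup>2)) * (1/r)) (at w)"
    by (rule DERIV_chain2[of arcsin _ "\<lambda>w. w/r" w "1/r", OF DERIV_arcsin[OF wr]])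
       (use r in \<open>auto intro!: derivative_eq_intros\<close>)
  have d2: "((\<lambda>w. sqrt (r\<^sup>2 - w\<^sup>2)) has_real_derivative inverse (sqrt (r\<^sup>2 - w\<^sup>2)) / 2 * (- (2 * w))) (at w)"
    using pos by (auto intro!: derivative_eq_intros)
  have "(gfun_primitive a r has_real_derivative
      - r * (inverse (sqrt (r\<^sup>2 - w\<^sup>2)) / 2 * (- (2 * w))) - a * r * (inverse (sqrt (1 - (w/r)\<^sup>2)) * (1/r))) (at w)"
    unfolding gfun_primitive_def[abs_def] by (rule derivative_eq_intros d1 d2 refl)+ simp
  moreover have "- r * (inverse (sqrt (r\<^sup>2 - w\<^sup>2)) / 2 * (- (2 * w))) - a * r * (inverse (sqrt (1 - (w/r)\<^sup>2)) * (1/r))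
      = (w - a) * r / sqrt (r\<^sup>2 - w\<^sup>2)"
    unfolding sqrt_one_minus_sq_div[OF r] using pos r by (simp add: field_simps)
  ultimately show ?thesis by simp
qed

lemma continuous_on_gfun_primitive:
  assumes r: "0 < r" shows "continuous_on {-r..r} (gfun_primitive a r)"
proof -
  have b: "\<forall>x\<in>{-r..r}. - 1 \<le> x / r \<and> x / r \<le> 1" using r by (auto simp: field_simps)
  have "continuous_on {-r..r} (\<lambda>x. arcsin (x / r))"
    by (rule continuous_on_arcsin[OF _ b]) (use r in \<open>intro continuous_intros; auto\<close>)
  moreover have "continuous_on {-r..r} (\<lambda>x. sqrt (r\<^sup>2 - x\<^sup>2))"
    by (intro continuous_intros)
  ultimately show ?thesis unfolding gfun_primitive_def[abs_def]
    by (intro continuous_on_diff continuous_on_mult continuous_on_const)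
qed

lemma gfun_primitive_increment:
  assumes r: "0 < r" and a: "\<bar>a\<bar> \<le> r"
  shows "gfun_primitive a r r - gfun_primitive a r a = r\<^sup>2 * gfun (a/r)"
proof -
  have ar: "-1 \<le> a/r" "a/r \<le> 1" using a r by (auto simp: field_simps abs_le_iff)
  have "gfun_primitive a r r - gfun_primitive a r a = r * sqrt (r\<^sup>2 - a\<^sup>2) - a * r * (pi/2 - arcsin (a/r))"
    unfolding gfun_primitive_def using r by (simp add: algebra_simps)
  also have "\<dots> = r * sqrt (r\<^sup>2 - a\<^sup>2) - a * r * arccos (a/r)"
    using arccos_arcsin_eq[OF ar] by simp
  also have "\<dots> = r\<^sup>2 * gfun (a/r)"
    unfolding gfun_def sin_arccos[OF ar] sqrt_one_minus_sq_div[OF r] using r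
    by (simp add: field_simps power2_eq_square)
  finally show ?thesis .
qed

lemma gfun_as_integral:
  fixes a r :: real assumes a: "0 \<le> a" and ar: "a < r"
  defines "f \<equiv> \<lambda>w. (w - a) * r / sqrt (r\<^sup>2 - w\<^sup>2)"
  shows "set_integrable lborel {a<..<r} f" "(LBINT w:{a<..<r}. f w) = r\<^sup>2 * gfun (a/r)"
proof -
  have r: "0 < r" using a ar by simp
  have deriv: "DERIV (gfun_primitive a r) w :> f w" if "a < w" "w < r" for w
    unfolding f_def using has_real_derivative_gfun_primitive[OF r, of w a] that a by simp
  have contf: "isCont f w" if w: "a < w" "w < r" for w
  proof -
    have "0 < r\<^sup>2 - w\<^sup>2" using w a by (simp add: power_strict_mono)
    then show ?thesis unfolding f_def by (auto intro!: continuous_intros)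
  qed
  have nonneg: "AE w in lborel. ereal a < ereal w \<longrightarrow> ereal w < ereal r \<longrightarrow> 0 \<le> f w"
  proof (rule AE_I2, intro impI)
    fix w assume "ereal a < ereal w" "ereal w < ereal r"
    then have w: "a < w" "w < r" by auto
    then have "w\<^sup>2 \<le> r\<^sup>2" using a by (intro power_mono) auto
    then show "0 \<le> f w" unfolding f_def using w r by (intro divide_nonneg_nonneg mult_nonneg_nonneg) auto
  qed
  have contF: "continuous_on {a..r} (gfun_primitive a r)"
    by (rule continuous_on_subset[OF continuous_on_gfun_primitive[OF r]]) (use a in auto)
  have ftc: "set_integrable lborel (einterval a r) f"
    "(LBINT x=ereal a..ereal r. f x) = gfun_primitive a r r - gfun_primitive a r a"
    using interval_integral_FTC_nonneg[of a r "gfun_primitive a r" f, OF _ _ _ nonneg]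
      deriv contf continuous_on_Icc_at_rightD[OF contF ar] continuous_on_Icc_at_leftD[OF contF ar] ar
    by (simp_all add: ereal_tendsto_simps)
  show "set_integrable lborel {a<..<r} f" using ftc by simp
  show "(LBINT w:{a<..<r}. f w) = r\<^sup>2 * gfun (a/r)"
    using ftc ar a gfun_primitive_increment[OF r, of a] by (simp add: interval_integral_Ioo)
qed

lemma nn_integral_eq_set_integral:
  fixes f :: "real \<Rightarrow> real"
  assumes "set_integrable lborel S f" "\<And>x. x \<in> S \<Longrightarrow> 0 \<le> f x"
  shows "(\<integral>\<^sup>+x. ennreal (indicator S x * f x) \<partial>lborel) = ennreal (LBINT x:S. f x)"
proof -
  have "integrable lborel (\<lambda>x. indicator S x * f x)" using assms(1) unfolding set_integrable_def by simp
  moreover have "AE x in lborel. 0 \<le> indicator S x * f x" using assms(2) by (auto simp: indicator_def)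
  ultimately show ?thesis unfolding set_lebesgue_integral_def
    by (subst nn_integral_eq_integral) auto
qed

text \<open>Integrating this kernel over \<open>w\<close> gives the integrand of \<open>rho_tilde\<close> (by \<open>gfun_as_integral\<close>),
  integrating it over \<open>r\<close> gives \<open>(w - a) \<surd>(\<pi>/2) exp (- w\<^sup>2/2)\<close> (by \<open>integral_gauss_radial\<close>).\<close>

definition gfun_kernel :: "real \<Rightarrow> real \<Rightarrow> real \<Rightarrow> real" where
  "gfun_kernel a w r = (if a < w \<and> w < r then (w - a) * r * exp (- r\<^sup>2/2) / sqrt (r\<^sup>2 - w\<^sup>2) else 0)"

lemma nn_integral_gfun_kernel_fst:
  assumes a: "0 \<le> a"
  shows "(\<integral>\<^sup>+w. ennreal (gfun_kernel a w r) \<partial>lborel)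
       = ennreal (indicator {a<..} r * (r\<^sup>2 * gfun (a/r) * exp (- r\<^sup>2/2)))"
proof (cases "a < r")
  case False
  then have "gfun_kernel a w r = 0" for w unfolding gfun_kernel_def by auto
  then show ?thesis using False by simp
next
  case True
  define f where "f w = (w - a) * r / sqrt (r\<^sup>2 - w\<^sup>2)" for w
  have fi: "set_integrable lborel {a<..<r} f" and fv: "(LBINT w:{a<..<r}. f w) = r\<^sup>2 * gfun (a/r)"
    using gfun_as_integral[OF a True] unfolding f_def by auto
  have "gfun_kernel a w r = indicator {a<..<r} w * (exp (- r\<^sup>2/2) * f w)" for w
    unfolding gfun_kernel_def f_def by (auto simp: indicator_def)
  then have "(\<integral>\<^sup>+w. ennreal (gfun_kernel a w r) \<partial>lborel)
      = (\<integral>\<^sup>+w. ennreal (indicator {a<..<r} w * (exp (- r\<^sup>2/2) * f w)) \<partial>lborel)"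
    by simp
  also have "\<dots> = ennreal (LBINT w:{a<..<r}. exp (- r\<^sup>2/2) * f w)"
  proof (rule nn_integral_eq_set_integral)
    show "set_integrable lborel {a<..<r} (\<lambda>w. exp (- r\<^sup>2/2) * f w)"
      using fi by (rule set_integrable_mult_right)
    fix w assume w: "w \<in> {a<..<r}"
    then have "w\<^sup>2 \<le> r\<^sup>2" using a by (intro power_mono) auto
    then show "0 \<le> exp (- r\<^sup>2/2) * f w"
      unfolding f_def using w a by (auto intro!: divide_nonneg_nonneg mult_nonneg_nonneg)
  qed
  also have "(LBINT w:{a<..<r}. exp (- r\<^sup>2/2) * f w) = exp (- r\<^sup>2/2) * (r\<^sup>2 * gfun (a/r))"
    using fv by (simp add: set_integral_mult_right)
  finally show ?thesis using True by (simp add: mult_ac)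
qed

lemma nn_integral_gfun_kernel_snd:
  assumes a: "0 \<le> a"
  shows "(\<integral>\<^sup>+r. ennreal (gfun_kernel a w r) \<partial>lborel)
       = ennreal (indicator {a<..} w * ((w - a) * sqrt (pi/2) * exp (- w\<^sup>2/2)))"
proof (cases "a < w")
  case False
  then have "gfun_kernel a w r = 0" for r unfolding gfun_kernel_def by auto
  then show ?thesis using False by simp
next
  case True
  then have w0: "0 < w" using a by simp
  define k where "k r = r * exp (- r\<^sup>2/2) / sqrt (r\<^sup>2 - w\<^sup>2)" for r
  have ki: "set_integrable lborel {w<..} k" and kv: "(LBINT r:{w<..}. k r) = sqrt (pi/2) * exp (- w\<^sup>2/2)"
    using integral_gauss_radial[OF w0] unfolding k_def by auto
  have "gfun_kernel a w r = indicator {w<..} r * ((w - a) * k r)" for r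
    unfolding gfun_kernel_def k_def using True by (auto simp: indicator_def)
  then have "(\<integral>\<^sup>+r. ennreal (gfun_kernel a w r) \<partial>lborel)
      = (\<integral>\<^sup>+r. ennreal (indicator {w<..} r * ((w - a) * k r)) \<partial>lborel)"
    by simp
  also have "\<dots> = ennreal (LBINT r:{w<..}. (w - a) * k r)"
  proof (rule nn_integral_eq_set_integral)
    show "set_integrable lborel {w<..} (\<lambda>r. (w - a) * k r)"
      using ki by (rule set_integrable_mult_right)
    fix r assume r: "r \<in> {w<..}"
    then have "w\<^sup>2 \<le> r\<^sup>2" using w0 by (intro power_mono) auto
    then show "0 \<le> (w - a) * k r"
      unfolding k_def using r w0 True by (auto intro!: divide_nonneg_nonneg mult_nonneg_nonneg)
  qed
  also have "(LBINT r:{w<..}. (w - a) * k r) = (w - a) * (sqrt (pi/2) * exp (- w\<^sup>2/2))"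
    using kv by (simp add: set_integral_mult_right)
  finally show ?thesis using True by (simp add: mult_ac)
qed

lemma sqrt_pi_half_gauss: "sqrt (pi/2) * exp (- w\<^sup>2/2) = pi * std_normal_density w"
proof -
  have "sqrt (pi/2) * sqrt (2*pi) = pi"
    by (simp add: real_sqrt_mult[symmetric])
  then have "sqrt (pi/2) = pi / sqrt (2*pi)" by (simp add: field_simps)
  then show ?thesis unfolding std_normal_density_def by simp
qed

lemma nn_integral_gfun_integrand:
  assumes a: "0 \<le> a"
  shows "(\<integral>\<^sup>+r. ennreal (indicator {a<..} r * (r\<^sup>2 * gfun (a/r) * exp (- r\<^sup>2/2))) \<partial>lborel)
       = ennreal (pi * normal_loss a)"
proof -
  have "(\<lambda>(w, r). ennreal (gfun_kernel a w r)) \<in> borel_measurable (lborel \<Otimes>\<^sub>M lborel)"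
    unfolding gfun_kernel_def by measurable
  then have "(\<integral>\<^sup>+r. (\<integral>\<^sup>+w. ennreal (gfun_kernel a w r) \<partial>lborel) \<partial>lborel)
      = (\<integral>\<^sup>+w. (\<integral>\<^sup>+r. ennreal (gfun_kernel a w r) \<partial>lborel) \<partial>lborel)"
    by (rule lborel_pair.Fubini')
  then have "(\<integral>\<^sup>+r. ennreal (indicator {a<..} r * (r\<^sup>2 * gfun (a/r) * exp (- r\<^sup>2/2))) \<partial>lborel)
      = (\<integral>\<^sup>+w. ennreal (indicator {a<..} w * (pi * ((w - a) * std_normal_density w))) \<partial>lborel)"
    unfolding nn_integral_gfun_kernel_fst[OF a] nn_integral_gfun_kernel_snd[OF a] mult.assoc[of "w - a" for w]
      sqrt_pi_half_gauss by (simp add: mult_ac)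
  also have "\<dots> = ennreal (LBINT w:{a<..}. pi * ((w - a) * std_normal_density w))"
    by (rule nn_integral_eq_set_integral)
       (auto intro!: set_integrable_mult_right set_integrable_normal_loss_integrand mult_nonneg_nonneg)
  also have "(LBINT w:{a<..}. pi * ((w - a) * std_normal_density w)) = pi * normal_loss a"
    unfolding normal_loss_def by (simp add: set_integral_mult_right)
  finally show ?thesis .
qed

lemma gfun_integrand_nonneg:
  assumes "0 \<le> a" "a < r" shows "0 \<le> r\<^sup>2 * gfun (a/r) * exp (- r\<^sup>2/2)"
proof -
  have "0 \<le> a/r" "a/r \<le> 1" using assms by (auto simp: field_simps)
  then show ?thesis by (auto intro!: mult_nonneg_nonneg gfun_nonneg)
qed

lemma continuous_on_gfun_integrand:
  assumes a: "0 \<le> a" shows "continuous_on {a<..} (\<lambda>r. r\<^sup>2 * gfun (a/r) * exp (- r\<^sup>2/2))"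
proof -
  have b: "\<forall>x\<in>{a<..}. - 1 \<le> a / x \<and> a / x \<le> 1" using a by (auto simp: field_simps)
  have c: "continuous_on {a<..} (\<lambda>x. a / x)" using a by (intro continuous_intros) auto
  have "continuous_on {a<..} (\<lambda>x. arccos (a / x))" by (rule continuous_on_arccos[OF c b])
  then show ?thesis unfolding gfun_def
    by (intro continuous_intros c; use a b in auto)
qed

lemma integral_gfun_eq_normal_loss:
  fixes a :: real assumes a: "0 \<le> a"
  shows "(LBINT r:{a..}. r\<^sup>2 * exp (- (r\<^sup>2) / 2) * gfun (a / r)) = pi * normal_loss a"
proof -
  define G where "G r = indicator {a<..} r * (r\<^sup>2 * gfun (a/r) * exp (- r\<^sup>2/2))" for r
  have G_measurable: "G \<in> borel_measurable lborel"
    using borel_measurable_continuous_on_indicator[OF _ continuous_on_gfun_integrand[OF a]]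
    unfolding G_def[abs_def] by (simp add: measurable_lborel1)
  have G_nonneg: "0 \<le> G r" for r
    unfolding G_def using gfun_integrand_nonneg[OF a] by (simp add: indicator_def)
  have nn_G: "(\<integral>\<^sup>+r. ennreal (G r) \<partial>lborel) = ennreal (pi * normal_loss a)"
    unfolding G_def by (rule nn_integral_gfun_integrand[OF a])
  have "integrable lborel G"
    by (rule integrableI_nonneg) (use G_measurable G_nonneg nn_G in auto)
  then have "ennreal (integral\<^sup>L lborel G) = ennreal (pi * normal_loss a)"
    using nn_G nn_integral_eq_integral[OF \<open>integrable lborel G\<close>] G_nonneg by simp
  then have "integral\<^sup>L lborel G = pi * normal_loss a"
    using G_nonneg normal_loss_nonneg[of a] by (simp add: integral_nonneg)
  moreover have "(LBINT r:{a..}. r\<^sup>2 * exp (- (r\<^sup>2) / 2) * gfun (a / r))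
      = (LBINT r:{a<..}. r\<^sup>2 * exp (- (r\<^sup>2) / 2) * gfun (a / r))"
    by (rule set_integral_discrete_difference[where X="{a}"]) auto
  ultimately show ?thesis
    unfolding set_lebesgue_integral_def G_def by (simp add: mult_ac)
qed

lemma rho_tilde_eq_normal_loss:
  assumes "0 < s" "0 \<le> d" shows "rho_tilde d s = 2 * s * normal_loss (d / s)"
proof -
  have e: "(\<lambda>r. r\<^sup>2 * exp (- (r\<^sup>2) / 2) * gfun (d / (r * s))) = (\<lambda>r. r\<^sup>2 * exp (- (r\<^sup>2) / 2) * gfun (d / s / r))"
    by (simp add: mult.commute)
  have "0 \<le> d / s" using assms by simp
  from integral_gfun_eq_normal_loss[OF this]
  show ?thesis unfolding rho_tilde_def e by simp
qed

section \<open>Gaussian data\<close>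

lemma nn_integral_normal_density:
  "0 < \<sigma> \<Longrightarrow> (\<integral>\<^sup>+x. ennreal (normal_density \<mu> \<sigma> x) \<partial>lborel) = 1"
  by (subst nn_integral_eq_integral) auto

lemma gauss2_eq_product:
  "gauss2 t s = (\<lambda>(x, y). ennreal (normal_density (fst t) s x) * ennreal (normal_density (snd t) s y))"
  unfolding gauss2_def by (auto simp: ennreal_mult fun_eq_iff)

lemma (in prob_space) gauss2_marginals:
  assumes s: "0 < s" and X: "distributed M lborel X (gauss2 t s)"
  shows "distributed M lborel (\<lambda>\<omega>. fst (X \<omega>)) (\<lambda>x. ennreal (normal_density (fst t) s x))"
    and "distributed M lborel (\<lambda>\<omega>. snd (X \<omega>)) (\<lambda>y. ennreal (normal_density (snd t) s y))"
proof -
  have J: "distributed M (lborel \<Otimes>\<^sub>M lborel) (\<lambda>\<omega>. (fst (X \<omega>), snd (X \<omega>)))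
      (\<lambda>(x, y). ennreal (normal_density (fst t) s x) * ennreal (normal_density (snd t) s y))"
    using X unfolding gauss2_eq_product lborel_prod by simp
  show "distributed M lborel (\<lambda>\<omega>. fst (X \<omega>)) (\<lambda>x. ennreal (normal_density (fst t) s x))"
    using distr_marginal1[OF lborel.sigma_finite_measure_axioms lborel.sigma_finite_measure_axioms J] s
    by (simp add: nn_integral_cmult nn_integral_normal_density)
  show "distributed M lborel (\<lambda>\<omega>. snd (X \<omega>)) (\<lambda>y. ennreal (normal_density (snd t) s y))"
    using distr_marginal2[OF lborel.sigma_finite_measure_axioms lborel.sigma_finite_measure_axioms J] s
    by (simp add: nn_integral_multc nn_integral_normal_density)
qed

lemma (in prob_space) gauss2_indep_components:
  assumes s: "0 < s" and X: "distributed M lborel X (gauss2 t s)"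
  shows "indep_var borel (\<lambda>\<omega>. fst (X \<omega>)) borel (\<lambda>\<omega>. snd (X \<omega>))"
proof -
  define f where "f x = ennreal (normal_density (fst t) s x)" for x
  define g where "g y = ennreal (normal_density (snd t) s y)" for y
  note X1 = gauss2_marginals(1)[OF s X, folded f_def]
  note X2 = gauss2_marginals(2)[OF s X, folded g_def]
  have "sigma_finite_measure (density lborel g)"
    unfolding g_def by (rule prob_space_imp_sigma_finite[OF prob_space_normal_density]) (rule s)
  moreover have "f \<in> borel_measurable lborel" "g \<in> borel_measurable lborel"
    unfolding f_def[abs_def] g_def[abs_def] by simp_all
  ultimately have "density lborel f \<Otimes>\<^sub>M density lborel g = density (lborel \<Otimes>\<^sub>M lborel) (\<lambda>(x,y). f x * g y)"
    using pair_measure_density lborel.sigma_finite_measure_axioms by blast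
  also have "\<dots> = distr M (lborel \<Otimes>\<^sub>M lborel) X"
    using distributed_distr_eq_density[OF X] unfolding gauss2_eq_product lborel_prod f_def g_def by simp
  finally have "distr M borel (\<lambda>\<omega>. fst (X \<omega>)) \<Otimes>\<^sub>M distr M borel (\<lambda>\<omega>. snd (X \<omega>))
      = distr M (borel \<Otimes>\<^sub>M borel) (\<lambda>\<omega>. (fst (X \<omega>), snd (X \<omega>)))"
    using distributed_distr_eq_density[OF X1] distributed_distr_eq_density[OF X2]
    by (simp cong: distr_cong)
  moreover have "random_variable borel (\<lambda>\<omega>. fst (X \<omega>))" "random_variable borel (\<lambda>\<omega>. snd (X \<omega>))"
    using distributed_measurable[OF X1] distributed_measurable[OF X2] by simp_all
  ultimately show ?thesis by (simp add: indep_var_distribution_eq)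
qed

lemma (in prob_space) gauss2_diff_distributed:
  assumes s: "0 < s" and X: "distributed M lborel X (gauss2 t s)"
  shows "distributed M lborel (\<lambda>\<omega>. snd (X \<omega>) - fst (X \<omega>)) (normal_density (snd t - fst t) (sqrt 2 * s))"
proof -
  have "distributed M lborel (\<lambda>\<omega>. fst (X \<omega>) - snd (X \<omega>)) (normal_density (fst t - snd t) (sqrt (s\<^sup>2 + s\<^sup>2)))"
    by (rule diff_indep_normal[OF gauss2_indep_components[OF s X] s s gauss2_marginals[OF s X]])
  then have "distributed M lborel (\<lambda>\<omega>. 0 + (-1) * (fst (X \<omega>) - snd (X \<omega>)))
      (normal_density (0 + (-1) * (fst t - snd t)) (\<bar>-1\<bar> * sqrt (s\<^sup>2 + s\<^sup>2)))"
    by (rule normal_density_affine) (use s in auto)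
  moreover have "sqrt (s\<^sup>2 + s\<^sup>2) = sqrt 2 * s" using s by (simp add: real_sqrt_mult)
  ultimately show ?thesis by simp
qed

context Z2_frechet
begin

lemma mean_abs_diff_gaussian:
  assumes s: "0 < s" and X: "distributed M lborel X (gauss2 t s)"
  shows "mean_abs_diff = \<bar>snd t - fst t\<bar> + 2 * (sqrt 2 * s) * normal_loss (\<bar>snd t - fst t\<bar> / (sqrt 2 * s))"
proof -
  have "distributed M lborel diff_coord (normal_density (snd t - fst t) (sqrt 2 * s))"
    using gauss2_diff_distributed[OF s X] unfolding diff_coord_def[abs_def] .
  then have "mean_abs_diff = (\<integral>x. normal_density (snd t - fst t) (sqrt 2 * s) x * \<bar>x\<bar> \<partial>lborel)"
    unfolding mean_abs_diff_def by (rule distributed_integral[symmetric]) auto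
  then show ?thesis using integral_abs_normal[of "sqrt 2 * s"] s by simp
qed

lemma dQ_frechet_rep_gaussian:
  assumes s: "0 < s" and X: "distributed M lborel X (gauss2 (expectation X) s)"
  shows "dQ (expectation X) frechet_rep = rho_tilde (infdist (expectation X) Lline) s"
proof -
  define d where "d = infdist (expectation X) Lline"
  have d: "\<bar>expectation diff_coord\<bar> = sqrt 2 * d"
    unfolding d_def infdist_Lline diff_expectation by simp
  have "dQ (expectation X) frechet_rep = (mean_abs_diff - \<bar>expectation diff_coord\<bar>) / sqrt 2"
    by (rule dQ_expectation_frechet_rep)
  also have "\<dots> = 2 * s * normal_loss (d / s)"
    unfolding mean_abs_diff_gaussian[OF s X] diff_expectation d[unfolded diff_expectation]
    using s by simp
  also have "\<dots> = rho_tilde d s"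
    by (rule rho_tilde_eq_normal_loss[symmetric]) (use s in \<open>auto simp: d_def infdist_nonneg\<close>)
  finally show ?thesis unfolding d_def .
qed

end

section \<open>Asymptotics of the bias\<close>

lemma integral_rsq_gauss: "(LBINT r:{0..}. r\<^sup>2 * exp (- (r\<^sup>2) / 2)) = pi * normal_loss 0"
  using integral_gfun_eq_normal_loss[of 0] by (simp add: gfun_def)

lemma tendsto_normal_loss_scaled: assumes d: "0 < d" shows "((\<lambda>s. normal_loss (d / s)) \<longlongrightarrow> normal_loss 0) at_top"
proof (rule tendsto_sandwich[of "\<lambda>s. std_normal_density (d/s) - d/s" _ _ "\<lambda>s. std_normal_density (d/s)"])
  have ev: "eventually (\<lambda>s::real. 0 < s) at_top" by (rule eventually_gt_at_top)
  show "eventually (\<lambda>s. std_normal_density (d/s) - d/s \<le> normal_loss (d/s)) at_top"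
    using ev by eventually_elim (rule normal_loss_ge, use d in simp)
  show "eventually (\<lambda>s. normal_loss (d/s) \<le> std_normal_density (d/s)) at_top"
    using ev by eventually_elim (rule normal_loss_le, use d in simp)
  have p: "normal_loss 0 = 1 / sqrt (2*pi)" unfolding normal_loss_0 std_normal_density_def by simp
  have l0: "((\<lambda>s. d/s) \<longlongrightarrow> 0) at_top" using d by real_asymp
  have l2': "((\<lambda>s. 1 / sqrt (2*pi) * exp (- (d/s)\<^sup>2/2)) \<longlongrightarrow> 1 / sqrt (2*pi) * exp (- 0\<^sup>2/2)) at_top"
    by (intro tendsto_intros l0) auto
  have l2: "((\<lambda>s. 1 / sqrt (2*pi) * exp (- (d/s)\<^sup>2/2)) \<longlongrightarrow> 1 / sqrt (2*pi)) at_top"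
    using l2' by simp
  have l1: "((\<lambda>s. 1 / sqrt (2*pi) * exp (- (d/s)\<^sup>2/2) - d/s) \<longlongrightarrow> 1 / sqrt (2*pi) - 0) at_top"
    by (intro tendsto_intros l0 l2)
  show "((\<lambda>s. std_normal_density (d/s) - d/s) \<longlongrightarrow> normal_loss 0) at_top"
    unfolding p std_normal_density_def using l1 by simp
  show "((\<lambda>s. std_normal_density (d/s)) \<longlongrightarrow> normal_loss 0) at_top"
    unfolding p std_normal_density_def using l2 .
qed

lemma rho_tilde_asymp_equiv_at_top: assumes d: "0 < d"
  shows "(\<lambda>s. rho_tilde d s) \<sim>[at_top] (\<lambda>s. s * (2 / pi) * (LBINT r:{0..}. r\<^sup>2 * exp (- (r\<^sup>2) / 2)))"
proof (rule asymp_equivI')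
  have ev: "eventually (\<lambda>s::real. 0 < s) at_top" by (rule eventually_gt_at_top)
  have "eventually (\<lambda>s. normal_loss (d/s) / normal_loss 0 = rho_tilde d s / (s * (2 / pi) * (LBINT r:{0..}. r\<^sup>2 * exp (- (r\<^sup>2) / 2)))) at_top"
    using ev
  proof eventually_elim
    case (elim s)
    then show ?case unfolding integral_rsq_gauss rho_tilde_eq_normal_loss[OF elim less_imp_le[OF d]]
      using normal_loss_0_pos by (simp add: field_simps)
  qed
  moreover have "((\<lambda>s. normal_loss (d/s) / normal_loss 0) \<longlongrightarrow> normal_loss 0 / normal_loss 0) at_top"
    by (intro tendsto_divide tendsto_normal_loss_scaled d tendsto_const) (use normal_loss_0_pos in simp)
  ultimately show "((\<lambda>s. rho_tilde d s / (s * (2 / pi) * (LBINT r:{0..}. r\<^sup>2 * exp (- (r\<^sup>2) / 2)))) \<longlongrightarrow> 1) at_top"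
    using normal_loss_0_pos by (simp add: tendsto_cong)
qed

lemma exp_neg_inverse_sq_smallo:
  assumes d: "0 < d"
  shows "(\<lambda>s. exp (- (d/s)\<^sup>2/2)) \<in> o[at_right (0::real)](\<lambda>s. s ^ (2*k))"
proof (rule smalloI_tendsto)
  define u where "u s = (d/s)\<^sup>2/2" for s
  have "filterlim u at_top (at_right 0)" unfolding u_def using d by real_asymp
  then have "((\<lambda>s. (2/d\<^sup>2)^k * ((u s) ^ k / exp (u s))) \<longlongrightarrow> (2/d\<^sup>2)^k * 0) (at_right 0)"
    by (intro tendsto_mult tendsto_const filterlim_compose[OF tendsto_power_div_exp_0])
  moreover have "(2/d\<^sup>2)^k * ((u s) ^ k / exp (u s)) = exp (- (d/s)\<^sup>2/2) / s ^ (2*k)" if "0 < s" for s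
  proof -
    have "(2/d\<^sup>2) * u s = 1 / s\<^sup>2" unfolding u_def using d that by (simp add: power_divide field_simps)
    then have e1: "(2/d\<^sup>2)^k * (u s) ^ k = 1 / s ^ (2*k)"
      by (metis power_mult_distrib power_mult power_one_over)
    have e2: "exp (- (d/s)\<^sup>2/2) = 1 / exp (u s)" unfolding u_def by (simp add: exp_minus field_simps)
    have "(2/d\<^sup>2)^k * ((u s) ^ k / exp (u s)) = ((2/d\<^sup>2)^k * (u s) ^ k) / exp (u s)"
      by (rule times_divide_eq_right)
    also have "\<dots> = exp (- (d/s)\<^sup>2/2) / s ^ (2*k)"
      unfolding e1 e2 by simp
    finally show ?thesis .
  qed
  ultimately show "((\<lambda>s. exp (- (d/s)\<^sup>2/2) / s ^ (2*k)) \<longlongrightarrow> 0) (at_right 0)"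
    by (simp add: Lim_transform_eventually eventually_at_right_less[THEN eventually_mono])
  show "eventually (\<lambda>s. s ^ (2*k) \<noteq> 0) (at_right (0::real))"
    using eventually_at_right_less[of 0] by eventually_elim auto
qed

lemma rho_tilde_bigo_exp:
  assumes d: "0 < d"
  shows "(\<lambda>s. rho_tilde d s) \<in> O[at_right (0::real)](\<lambda>s. exp (- (d/s)\<^sup>2/2))"
proof (rule bigoI[where c = 2])
  have "eventually (\<lambda>s. 0 < s \<and> s < 1) (at_right (0::real))"
    by (auto simp: eventually_at_right_field intro!: exI[of _ 1])
  then show "eventually (\<lambda>s. norm (rho_tilde d s) \<le> 2 * norm (exp (- (d/s)\<^sup>2/2))) (at_right 0)"
  proof eventually_elim
    case (elim s)
    then have "0 < s" "s < 1" by auto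
    have "normal_loss (d/s) \<le> std_normal_density (d/s)"
      using d \<open>0 < s\<close> by (intro normal_loss_le) simp
    also have "\<dots> \<le> exp (- (d/s)\<^sup>2/2)"
    proof -
      have "1 / sqrt (2*pi) \<le> 1" using pi_gt3 by (simp add: divide_le_eq real_le_rsqrt)
      then show ?thesis unfolding std_normal_density_def
        by (intro mult_left_le_one_le) auto
    qed
    finally have "s * normal_loss (d/s) \<le> 1 * exp (- (d/s)\<^sup>2/2)"
      using \<open>0 < s\<close> \<open>s < 1\<close> normal_loss_nonneg by (intro mult_mono) auto
    then show ?case
      using rho_tilde_eq_normal_loss[of s d] d \<open>0 < s\<close> normal_loss_nonneg[of "d/s"] by simp
  qed
qed

lemma power_double_bigo_at_right_0: "(\<lambda>s. s ^ (2*k)) \<in> O[at_right (0::real)](\<lambda>s. s ^ k)"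
proof (rule bigoI[where c = 1])
  have "eventually (\<lambda>s. 0 < s \<and> s < 1) (at_right (0::real))"
    by (auto simp: eventually_at_right_field intro!: exI[of _ 1])
  then show "eventually (\<lambda>s. norm (s ^ (2*k)) \<le> 1 * norm (s ^ k)) (at_right (0::real))"
  proof eventually_elim
    case (elim s)
    have "s ^ k * s ^ k \<le> 1 * s ^ k"
      using elim by (intro mult_right_mono power_le_one) auto
    moreover have "\<bar>s\<bar> = s" using elim by simp
    ultimately show ?case by (simp add: mult_2 power_add power_abs)
  qed
qed

lemma rho_tilde_smallo_at_right_0:
  assumes d: "0 < d" shows "(\<lambda>s. rho_tilde d s) \<in> o[at_right (0::real)](\<lambda>s. s ^ k)"
  using landau_o.big_small_trans[OF rho_tilde_bigo_exp[OF d]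
      landau_o.small_big_trans[OF exp_neg_inverse_sq_smallo[OF d] power_double_bigo_at_right_0]] .

lemma rho_tilde_0: "0 < s \<Longrightarrow> rho_tilde 0 s = 2 * normal_loss 0 * s"
  using rho_tilde_eq_normal_loss[of s 0] by simp

theorem mainTheorem8:
  fixes M :: "'w measure" and X :: "'w \<Rightarrow> real \<times> real"
  assumes "prob_space M"
    and "X \<in> borel_measurable M"
    and "integrable M (\<lambda>\<omega>. (norm (X \<omega>))\<^sup>2)"
  defines "t0 \<equiv> (LINT \<omega>|M. X \<omega>)"
  shows
    "(t0 \<in> Lline \<longrightarrow>
        (frechet_mean M X t0 \<longleftrightarrow> measure M {\<omega> \<in> space M. X \<omega> \<in> Lline} = 1))
   \<and> (t0 \<in> HPA \<longrightarrow>
        (frechet_mean M X t0 \<longleftrightarrow> measure M {\<omega> \<in> space M. X \<omega> \<in> HPA \<union> Lline} = 1))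
   \<and> (t0 \<in> HPB \<longrightarrow>
        (frechet_mean M X t0 \<longleftrightarrow> measure M {\<omega> \<in> space M. X \<omega> \<in> HPB \<union> Lline} = 1))
   \<and> (\<forall>s>0. distributed M lborel X (gauss2 t0 s) \<longrightarrow>
        (\<exists>mstar. frechet_mean M X mstar
           \<and> (\<forall>m'. frechet_mean M X m' \<longrightarrow> orbit m' = orbit mstar)
           \<and> (\<exists>c::real. mstar = t0 + c *\<^sub>R (1, -1))
           \<and> dQ t0 mstar = rho_tilde (infdist t0 Lline) s))
   \<and> (\<forall>x\<in>{0..1}. gfun x \<ge> 0)
   \<and> (\<forall>d>0. (\<lambda>s. rho_tilde d s) \<sim>[at_top]
              (\<lambda>s. s * (2 / pi) * (LBINT r:{0..}. r\<^sup>2 * exp (- (r\<^sup>2) / 2))))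
   \<and> (\<forall>d>0. \<forall>k::nat. (\<lambda>s. rho_tilde d s) \<in> o[at_right (0::real)](\<lambda>s. s ^ k))
   \<and> (\<exists>c. \<forall>s>0. rho_tilde 0 s = c * s)"
proof -
  interpret Z2_frechet M X
    using assms(1-3) by (intro Z2_frechet.intro Z2_frechet_axioms.intro)
  have gaussian: "\<exists>mstar. frechet_mean M X mstar
           \<and> (\<forall>m'. frechet_mean M X m' \<longrightarrow> orbit m' = orbit mstar)
           \<and> (\<exists>c::real. mstar = t0 + c *\<^sub>R (1, -1))
           \<and> dQ t0 mstar = rho_tilde (infdist t0 Lline) s"
    if "0 < s" "distributed M lborel X (gauss2 t0 s)" for s
    using frechet_mean_frechet_rep frechet_mean_orbit_eq frechet_rep_on_perpendicular
      dQ_frechet_rep_gaussian that unfolding t0_def by blast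
  show ?thesis
    using frechet_mean_expectation_Lline frechet_mean_expectation_HPA frechet_mean_expectation_HPB
      gaussian gfun_nonneg rho_tilde_asymp_equiv_at_top rho_tilde_smallo_at_right_0 rho_tilde_0
    unfolding t0_def by auto
qed

end
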